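(* For every $v\in\mathrm{Pl}_n$, the graph $G_v$ is the disjoint union of a complete multipartite graph and a set of isolated nodes; i.e., if $U\subseteq[n]$ is the set of non-isolated nodes of $G_v$, then the induced subgraph of $G_v$ on $U$ is a complete multipartite graph (equivalently, non-adjacency is an equivalence relation on $U$).
   Context: Coordinates of $\mathbb R^{\binom n2}$ are indexed by unordered pairs $\{i,j\}\subset[n]$, written $v_{ij}=v_{ji}$. $\mathrm{Pl}_n=\{v\in\mathbb R_{\ge0}^{\binom n2} : v_{ij}v_{kl}\le v_{ik}v_{jl}+v_{il}v_{jk}\ \text{for all pairwise distinct } i,j,k,l\in[n]\}$. For $v\in\mathrm{Pl}_n$, $G_v$ is the graph with vertex set $[n]$ in which $\{i,j\}$ is an edge iff $v_{ij}>0$. *)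

theory Defs
  imports Complex_Main "HOL-Library.Disjoint_Sets"
begin

text \<open>A vector in R^(n choose 2) is modelled as a function on unordered pairs,
  v :: nat set => real, where only the values v {i,j} for distinct i,j in {1..n}
  matter. Thus v_ij = v {i,j} = v {j,i} automatically.\<close>

definition Pl :: "nat \<Rightarrow> (nat set \<Rightarrow> real) set" where
  "Pl n = {v. (\<forall>i\<in>{1..n}. \<forall>j\<in>{1..n}. i \<noteq> j \<longrightarrow> 0 \<le> v {i, j}) \<and>
     (\<forall>i\<in>{1..n}. \<forall>j\<in>{1..n}. \<forall>k\<in>{1..n}. \<forall>l\<in>{1..n}.
        distinct [i, j, k, l] \<longrightarrow>
        v {i, j} * v {k, l} \<le> v {i, k} * v {j, l} + v {i, l} * v {j, k})}"

definition adj :: "nat \<Rightarrow> (nat set \<Rightarrow> real) \<Rightarrow> nat \<Rightarrow> nat \<Rightarrow> bool" where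
  "adj n v i j \<longleftrightarrow> i \<in> {1..n} \<and> j \<in> {1..n} \<and> i \<noteq> j \<and> v {i, j} > 0"

definition nonisolated :: "nat \<Rightarrow> (nat set \<Rightarrow> real) \<Rightarrow> nat set" where
  "nonisolated n v = {i \<in> {1..n}. \<exists>j. adj n v i j}"

definition complete_multipartite :: "('a \<Rightarrow> 'a \<Rightarrow> bool) \<Rightarrow> 'a set \<Rightarrow> bool" where
  "complete_multipartite E U \<longleftrightarrow>
     (\<exists>P. partition_on U P \<and>
        (\<forall>x\<in>U. \<forall>y\<in>U. x \<noteq> y \<longrightarrow> (E x y \<longleftrightarrow> \<not> (\<exists>B\<in>P. x \<in> B \<and> y \<in> B))))"

end

theory Submission
  imports Defs
begin

text \<open>If x and z are adjacent but both non-adjacent to y, pick a neighbour w of y.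
  The three-term Pluecker inequality for x, z, y, w then reads
  v_xz v_yw \<le> v_xy v_zw + v_xw v_zy = 0, contradicting v_xz v_yw > 0. Hence
  non-adjacency is an equivalence relation on the non-isolated nodes, whose classes
  are the parts of a complete multipartite graph.\<close>

lemma complete_multipartite_if_nonadjacency_trans:
  assumes sym: "\<And>x y. E x y \<Longrightarrow> E y x"
    and trans: "\<And>x y z. \<lbrakk>x \<in> U; y \<in> U; z \<in> U; x \<noteq> y; y \<noteq> z; x \<noteq> z;
                          \<not> E x y; \<not> E y z\<rbrakk> \<Longrightarrow> \<not> E x z"
  shows "complete_multipartite E U"
proof -
  define R where "R = {(x, y). x \<in> U \<and> y \<in> U \<and> (x = y \<or> \<not> E x y)}"
  have equiv: "equiv U R"
  proof (rule equivI)
    show "R \<subseteq> U \<times> U" unfolding R_def by auto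
    show "refl_on U R" unfolding refl_on_def R_def by auto
    show "sym R" unfolding sym_def R_def using sym by blast
    show "trans R" unfolding trans_def R_def using trans by blast
  qed
  have "x \<noteq> y \<Longrightarrow> E x y \<longleftrightarrow> \<not> (\<exists>B\<in>U // R. x \<in> B \<and> y \<in> B)"
    if "x \<in> U" "y \<in> U" for x y
    using that eq_equiv_class_iff2[OF equiv] in_quotient_imp_subset[OF equiv]
      quotientI[of x U R] equiv_class_self[OF equiv]
    unfolding R_def quotient_def by auto
  then show ?thesis
    using partition_on_quotient[OF equiv] unfolding complete_multipartite_def by blast
qed

lemma adj_sym: "adj n v i j \<Longrightarrow> adj n v j i"
  unfolding adj_def by (auto simp: insert_commute)

lemma Pl_nonadj_trans:
  assumes v: "v \<in> Pl n" and y: "y \<in> nonisolated n v"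
    and distinct: "x \<noteq> y" "y \<noteq> z" "x \<noteq> z"
    and nxy: "\<not> adj n v x y" and nyz: "\<not> adj n v y z"
  shows "\<not> adj n v x z"
proof
  assume xz: "adj n v x z"
  from y obtain w where yw: "adj n v y w" unfolding nonisolated_def by auto
  have "w \<noteq> x" "w \<noteq> z" using yw nxy nyz adj_sym by blast+
  with xz yw distinct have "distinct [x, z, y, w]" and nodes: "x \<in> {1..n}" "y \<in> {1..n}"
    "z \<in> {1..n}" "w \<in> {1..n}" unfolding adj_def by auto
  then have pluecker: "v {x, z} * v {y, w} \<le> v {x, y} * v {z, w} + v {x, w} * v {z, y}"
    using v unfolding Pl_def by blast
  have "0 \<le> v {x, y}" "0 \<le> v {y, z}" using v nodes distinct unfolding Pl_def by blast+
  with nxy nyz nodes distinct have "v {x, y} = 0" "v {z, y} = 0"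
    unfolding adj_def by (auto simp: insert_commute)
  moreover have "v {x, z} * v {y, w} > 0" using xz yw unfolding adj_def by simp
  ultimately show False using pluecker by simp
qed

theorem mainTheorem12:
  fixes n :: nat and v :: "nat set \<Rightarrow> real"
  assumes "v \<in> Pl n"
  shows "complete_multipartite (adj n v) (nonisolated n v)"
  by (rule complete_multipartite_if_nonadjacency_trans)
    (use adj_sym Pl_nonadj_trans[OF assms] in blast)+

end
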